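(* Let $X$ and $\Lambda$ be nonempty sets, $x^0\in X$, $f: X\to\mathbb{R}$, and $(f_\lambda)_{\lambda\in\Lambda}$ a family of real-valued functions on $X$ such that the feasible set $X_0:=\{x\in X:\ \sup_{\lambda\in\Lambda}f_\lambda(x)\le0\}$ is nonempty and $(f_\lambda(x))_{\lambda\in\Lambda}\in\ell^\infty(\Lambda)$ for every $x\in X$. Assume the family $(f_\lambda)_{\lambda\in\Lambda}\cup(f-f(x^0))$ is infsup-convex on $X$ and the Slater condition holds: there exists $x^1\in X$ with $\sup_{\lambda\in\Lambda}f_\lambda(x^1)<0$. Then $x^0$ is an optimal solution of $\inf_{x\in X_0}f(x)$ (i.e. $x^0\in X_0$ and $f(x^0)=\inf_{x\in X_0}f(x)$) if and only if $x^0\in X_0$ and there exists $\Phi_0\in\ell^\infty(\Lambda)^*_+$ such that the function $x\mapsto f(x)+\Phi_0((f_\lambda(x))_{\lambda\in\Lambda})$ attains its infimum on $X$ at $x^0$ and $\Phi_0((f_\lambda(x^0))_{\lambda\in\Lambda})=0$.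
   Context: $\ell^\infty(\Lambda)$ is the Banach space of bounded real functions on $\Lambda$ (sup-norm), $\ell^\infty(\Lambda)^*_+$ the cone of positive continuous linear functionals on it. The family $(f_\lambda)_{\lambda\in\Lambda}\cup(f-f(x^0))$ is the family indexed by $\Lambda\cup\{\mu\}$ ($\mu\notin\Lambda$) whose $\mu$-th member is $f-f(x^0)$. With $\Delta_m:=\{\mathbf t\in\mathbb{R}^m: t_j\ge0,\sum t_j=1\}$, a family $(g_i)_{i\in I}$ of real functions on $X$ is infsup-convex on $X$ if for all $m\ge1$, $\mathbf{t}\in\Delta_m$, $x_1,\dots,x_m\in X$: $\inf_{x\in X}\sup_{i\in I}g_i(x)\le\sup_{i\in I}\sum_{j=1}^m t_j g_i(x_j)$. *)

theory Defs
  imports "HOL-Analysis.Analysis"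
begin

text \<open>The index set \<Lambda> is represented by the (nonempty) type 'l.
  l-infinity(\<Lambda>): bounded real functions on \<Lambda>, with the sup-norm.\<close>

definition linfty :: "('l \<Rightarrow> real) set" where
  "linfty = {u. bounded (range u)}"

definition supnorm :: "('l \<Rightarrow> real) \<Rightarrow> real" where
  "supnorm u = (SUP l. \<bar>u l\<bar>)"

text \<open>Positive continuous linear functionals on l-infinity (values of \<Phi> outside
  l-infinity are irrelevant).\<close>

definition pos_cont_lin_functional :: "(('l \<Rightarrow> real) \<Rightarrow> real) \<Rightarrow> bool" where
  "pos_cont_lin_functional \<Phi> \<longleftrightarrow>
     (\<forall>u\<in>linfty. \<forall>v\<in>linfty. \<Phi> (\<lambda>l. u l + v l) = \<Phi> u + \<Phi> v) \<and>
     (\<forall>c::real. \<forall>u\<in>linfty. \<Phi> (\<lambda>l. c * u l) = c * \<Phi> u) \<and>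
     (\<exists>C. \<forall>u\<in>linfty. \<bar>\<Phi> u\<bar> \<le> C * supnorm u) \<and>
     (\<forall>u\<in>linfty. (\<forall>l. 0 \<le> u l) \<longrightarrow> 0 \<le> \<Phi> u)"

definition infsup_convex :: "('i \<Rightarrow> 'a \<Rightarrow> real) \<Rightarrow> 'a set \<Rightarrow> bool" where
  "infsup_convex g X \<longleftrightarrow>
     (\<forall>m::nat. \<forall>t::nat \<Rightarrow> real. \<forall>xs::nat \<Rightarrow> 'a.
        1 \<le> m \<longrightarrow> (\<forall>j<m. 0 \<le> t j) \<longrightarrow> (\<Sum>j<m. t j) = 1 \<longrightarrow> (\<forall>j<m. xs j \<in> X) \<longrightarrow>
        (INF x\<in>X. SUP i. ereal (g i x)) \<le> (SUP i. ereal (\<Sum>j<m. t j * g i (xs j))))"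

end

theory Submission
  imports Defs
begin

text \<open>Collect the objective and the constraints into g(x) = (f x - f x0, (f_l x)_l), a bounded function
  on Option Lambda. If x0 is optimal, every g(x) has a nonnegative coordinate, and infsup-convexity
  propagates this to every nonnegative combination of the g(x): the convex cone they generate
  has nonnegative supremum everywhere. Hahn--Banach, applied to the sublinear functional
  v \<mapsto> inf over k in the cone of sup (v + k), gives a linear functional below sup that is
  nonnegative on the cone; it is positive with value 1 at the constant 1, and splits into a
  weight alpha \<ge> 0 on the objective and a positive functional phi on the constraints (Fritz John).
  The Slater point forces alpha > 0, and phi / alpha is the multiplier. Conversely, a positive
  multiplier is nonpositive on feasible points, so the saddle inequality gives optimality.\<close>

subsection \<open>Linear spaces of real functions\<close>

definition fun_subspace :: "('i \<Rightarrow> real) set \<Rightarrow> bool" where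
  "fun_subspace V \<longleftrightarrow> (\<lambda>i. 0) \<in> V \<and> (\<forall>u\<in>V. \<forall>v\<in>V. (\<lambda>i. u i + v i) \<in> V) \<and>
     (\<forall>c. \<forall>u\<in>V. (\<lambda>i. c * u i) \<in> V)"

definition convex_fun_cone :: "('i \<Rightarrow> real) set \<Rightarrow> bool" where
  "convex_fun_cone K \<longleftrightarrow> (\<lambda>i. 0) \<in> K \<and> (\<forall>u\<in>K. \<forall>v\<in>K. (\<lambda>i. u i + v i) \<in> K) \<and>
     (\<forall>c\<ge>0. \<forall>u\<in>K. (\<lambda>i. c * u i) \<in> K)"

definition sublinear_on :: "('i \<Rightarrow> real) set \<Rightarrow> (('i \<Rightarrow> real) \<Rightarrow> real) \<Rightarrow> bool" where
  "sublinear_on V p \<longleftrightarrow> (\<forall>u\<in>V. \<forall>v\<in>V. p (\<lambda>i. u i + v i) \<le> p u + p v) \<and>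
     (\<forall>c\<ge>0. \<forall>u\<in>V. p (\<lambda>i. c * u i) = c * p u)"

definition linear_on :: "('i \<Rightarrow> real) set \<Rightarrow> (('i \<Rightarrow> real) \<Rightarrow> real) \<Rightarrow> bool" where
  "linear_on V \<phi> \<longleftrightarrow> (\<forall>u\<in>V. \<forall>v\<in>V. \<phi> (\<lambda>i. u i + v i) = \<phi> u + \<phi> v) \<and>
     (\<forall>c. \<forall>u\<in>V. \<phi> (\<lambda>i. c * u i) = c * \<phi> u)"

lemma fun_subspace_zero: "fun_subspace V \<Longrightarrow> (\<lambda>i. 0) \<in> V"
  by (simp add: fun_subspace_def)

lemma fun_subspace_add: "fun_subspace V \<Longrightarrow> u \<in> V \<Longrightarrow> v \<in> V \<Longrightarrow> (\<lambda>i. u i + v i) \<in> V"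
  by (simp add: fun_subspace_def)

lemma fun_subspace_scale: "fun_subspace V \<Longrightarrow> u \<in> V \<Longrightarrow> (\<lambda>i. c * u i) \<in> V"
  by (simp add: fun_subspace_def)

lemma fun_subspace_uminus: "fun_subspace V \<Longrightarrow> u \<in> V \<Longrightarrow> (\<lambda>i. - u i) \<in> V"
  using fun_subspace_scale[of V u "-1"] by simp

lemma fun_subspace_add_scale: "fun_subspace V \<Longrightarrow> u \<in> V \<Longrightarrow> v \<in> V \<Longrightarrow> (\<lambda>i. u i + t * v i) \<in> V"
  by (simp add: fun_subspace_add fun_subspace_scale)

lemma convex_fun_cone_zero: "convex_fun_cone K \<Longrightarrow> (\<lambda>i. 0) \<in> K"
  by (simp add: convex_fun_cone_def)

lemma convex_fun_cone_add: "convex_fun_cone K \<Longrightarrow> u \<in> K \<Longrightarrow> v \<in> K \<Longrightarrow> (\<lambda>i. u i + v i) \<in> K"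
  by (simp add: convex_fun_cone_def)

lemma convex_fun_cone_scale: "convex_fun_cone K \<Longrightarrow> 0 \<le> c \<Longrightarrow> u \<in> K \<Longrightarrow> (\<lambda>i. c * u i) \<in> K"
  by (simp add: convex_fun_cone_def)

lemma sublinear_onD_add: "sublinear_on V p \<Longrightarrow> u \<in> V \<Longrightarrow> v \<in> V \<Longrightarrow> p (\<lambda>i. u i + v i) \<le> p u + p v"
  by (simp add: sublinear_on_def)

lemma sublinear_onD_scale: "sublinear_on V p \<Longrightarrow> 0 \<le> c \<Longrightarrow> u \<in> V \<Longrightarrow> p (\<lambda>i. c * u i) = c * p u"
  by (simp add: sublinear_on_def)

lemma sublinear_on_zero: "fun_subspace V \<Longrightarrow> sublinear_on V p \<Longrightarrow> p (\<lambda>i. 0) = 0"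
  using sublinear_onD_scale[of V p 0 "\<lambda>i. 0"] fun_subspace_zero[of V] by simp

lemma sublinear_on_uminus_ge:
  assumes "fun_subspace V" "sublinear_on V p" "v \<in> V"
  shows "- p (\<lambda>i. - v i) \<le> p v"
  using sublinear_onD_add[OF assms(2,3) fun_subspace_uminus[OF assms(1,3)]]
    sublinear_on_zero[OF assms(1,2)] by simp

lemma sublinear_on_cong:
  "fun_subspace V \<Longrightarrow> sublinear_on V p \<Longrightarrow> (\<And>v. v \<in> V \<Longrightarrow> r v = p v) \<Longrightarrow> sublinear_on V r"
  unfolding sublinear_on_def by (simp add: fun_subspace_add fun_subspace_scale)

lemma linear_onD_add: "linear_on V \<phi> \<Longrightarrow> u \<in> V \<Longrightarrow> v \<in> V \<Longrightarrow> \<phi> (\<lambda>i. u i + v i) = \<phi> u + \<phi> v"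
  by (simp add: linear_on_def)

lemma linear_onD_scale: "linear_on V \<phi> \<Longrightarrow> u \<in> V \<Longrightarrow> \<phi> (\<lambda>i. c * u i) = c * \<phi> u"
  by (simp add: linear_on_def)

lemma positively_homogeneous_if_scale_le:
  assumes V: "fun_subspace V" and le: "\<And>c v. 0 < c \<Longrightarrow> v \<in> V \<Longrightarrow> r (\<lambda>i. c * v i) \<le> c * r v"
    and zero: "r (\<lambda>i. 0) = 0" and c: "0 \<le> c" and v: "v \<in> V"
  shows "r (\<lambda>i. c * v i) = c * r v"
proof (cases "c = 0")
  case False
  then have "0 < c"
    using c by simp
  then have "r (\<lambda>i. (1/c) * (c * v i)) \<le> (1/c) * r (\<lambda>i. c * v i)"
    by (intro le fun_subspace_scale[OF V v]) simp
  then have "c * r v \<le> r (\<lambda>i. c * v i)"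
    using \<open>0 < c\<close> by (simp add: field_simps)
  with le[OF \<open>0 < c\<close> v] show ?thesis
    by simp
qed (simp add: zero)

subsection \<open>The Hahn--Banach theorem\<close>

text \<open>Minorants are normalised to 0 off V, so that pointwise order on V is antisymmetric
  and Zorn's lemma applies.\<close>

definition sublinear_minorants :: "('i \<Rightarrow> real) set \<Rightarrow> (('i \<Rightarrow> real) \<Rightarrow> real) \<Rightarrow> (('i \<Rightarrow> real) \<Rightarrow> real) set"
  where "sublinear_minorants V q =
    {r. sublinear_on V r \<and> (\<forall>v\<in>V. r v \<le> q v) \<and> (\<forall>v. v \<notin> V \<longrightarrow> r v = 0)}"

definition directional_inf ::
    "('i \<Rightarrow> real) set \<Rightarrow> (('i \<Rightarrow> real) \<Rightarrow> real) \<Rightarrow> ('i \<Rightarrow> real) \<Rightarrow> ('i \<Rightarrow> real) \<Rightarrow> real" where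
  "directional_inf V p y x =
     (if x \<in> V then (INF t\<in>{0..}. p (\<lambda>i. x i + t * y i) - t * p y) else 0)"

lemma directional_inf_le:
  assumes V: "fun_subspace V" and p: "sublinear_on V p" and y: "y \<in> V" and x: "x \<in> V"
    and t: "0 \<le> t"
  shows "directional_inf V p y x \<le> p (\<lambda>i. x i + t * y i) - t * p y"
proof -
  have "- p (\<lambda>i. - x i) \<le> p (\<lambda>i. x i + s * y i) - s * p y" if "0 \<le> s" for s
  proof -
    have "p (\<lambda>i. (x i + s * y i) + - x i) \<le> p (\<lambda>i. x i + s * y i) + p (\<lambda>i. - x i)"
      by (rule sublinear_onD_add[OF p fun_subspace_add_scale[OF V x y] fun_subspace_uminus[OF V x]])
    then show ?thesis
      using sublinear_onD_scale[OF p that y] by simp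
  qed
  then have bdd: "bdd_below ((\<lambda>s. p (\<lambda>i. x i + s * y i) - s * p y) ` {0..})"
    by (intro bdd_belowI[where m = "- p (\<lambda>i. - x i)"]) auto
  show ?thesis
    unfolding directional_inf_def using x t cINF_lower[OF bdd, of t] by simp
qed

lemma directional_inf_greatest:
  assumes "x \<in> V" "\<And>t. 0 \<le> t \<Longrightarrow> m \<le> p (\<lambda>i. x i + t * y i) - t * p y"
  shows "m \<le> directional_inf V p y x"
  using assms by (auto simp: directional_inf_def intro!: cINF_greatest)

lemma directional_inf_scale_le:
  assumes V: "fun_subspace V" and p: "sublinear_on V p" and y: "y \<in> V" and c: "0 < c"
    and u: "u \<in> V"
  shows "directional_inf V p y (\<lambda>i. c * u i) \<le> c * directional_inf V p y u"
proof -
  have "directional_inf V p y (\<lambda>i. c * u i) / c \<le> directional_inf V p y u"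
  proof (rule directional_inf_greatest[OF u])
    fix s :: real
    assume s: "0 \<le> s"
    have "directional_inf V p y (\<lambda>i. c * u i) \<le> p (\<lambda>i. c * u i + (c * s) * y i) - (c * s) * p y"
      using directional_inf_le[OF V p y fun_subspace_scale[OF V u], of "c * s"] c s by simp
    also have "p (\<lambda>i. c * u i + (c * s) * y i) = c * p (\<lambda>i. u i + s * y i)"
      using sublinear_onD_scale[OF p _ fun_subspace_add_scale[OF V u y], of c s] c
      by (simp add: algebra_simps)
    finally show "directional_inf V p y (\<lambda>i. c * u i) / c \<le> p (\<lambda>i. u i + s * y i) - s * p y"
      using c by (simp add: field_simps)
  qed
  then show ?thesis
    using c by (simp add: field_simps)
qed

lemma directional_inf_add_le:
  assumes V: "fun_subspace V" and p: "sublinear_on V p" and y: "y \<in> V"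
    and u: "u \<in> V" and v: "v \<in> V"
  shows "directional_inf V p y (\<lambda>i. u i + v i) \<le> directional_inf V p y u + directional_inf V p y v"
proof -
  have "directional_inf V p y (\<lambda>i. u i + v i) - (p (\<lambda>i. v i + s' * y i) - s' * p y)
          \<le> directional_inf V p y u" if s': "0 \<le> s'" for s'
  proof (rule directional_inf_greatest[OF u])
    fix s :: real
    assume s: "0 \<le> s"
    have "directional_inf V p y (\<lambda>i. u i + v i)
            \<le> p (\<lambda>i. (u i + v i) + (s + s') * y i) - (s + s') * p y"
      using directional_inf_le[OF V p y fun_subspace_add[OF V u v], of "s + s'"] s s' by simp
    also have "p (\<lambda>i. (u i + v i) + (s + s') * y i) \<le> p (\<lambda>i. u i + s * y i) + p (\<lambda>i. v i + s' * y i)"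
      using sublinear_onD_add[OF p fun_subspace_add_scale[OF V u y, of s]
          fun_subspace_add_scale[OF V v y, of s']]
      by (simp add: algebra_simps)
    finally show "directional_inf V p y (\<lambda>i. u i + v i) - (p (\<lambda>i. v i + s' * y i) - s' * p y)
        \<le> p (\<lambda>i. u i + s * y i) - s * p y"
      by (simp add: algebra_simps)
  qed
  then have "directional_inf V p y (\<lambda>i. u i + v i) - directional_inf V p y u \<le> directional_inf V p y v"
    by (intro directional_inf_greatest[OF v]) (simp add: algebra_simps)
  then show ?thesis
    by simp
qed

lemma directional_inf_zero:
  assumes V: "fun_subspace V" and p: "sublinear_on V p" and y: "y \<in> V"
  shows "directional_inf V p y (\<lambda>i. 0) = 0"
proof -
  have "directional_inf V p y (\<lambda>i. 0) = (INF t\<in>{0::real..}. 0)"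
    unfolding directional_inf_def using fun_subspace_zero[OF V] sublinear_onD_scale[OF p _ y]
    by (auto intro!: INF_cong)
  then show ?thesis
    by simp
qed

lemma sublinear_on_directional_inf:
  assumes V: "fun_subspace V" and p: "sublinear_on V p" and y: "y \<in> V"
  shows "sublinear_on V (directional_inf V p y)"
  unfolding sublinear_on_def
  using directional_inf_add_le[OF V p y]
    positively_homogeneous_if_scale_le[of V "directional_inf V p y", OF V
      directional_inf_scale_le[OF V p y] directional_inf_zero[OF V p y]]
  by blast

text \<open>The infimum of p along the direction y is a sublinear minorant of p; minimality makes it
  equal to p, and at x this is superadditivity.\<close>

lemma minimal_sublinear_on_superadditive:
  assumes V: "fun_subspace V" and p: "sublinear_on V p"
    and minimal: "\<forall>r\<in>sublinear_minorants V p. \<forall>v\<in>V. r v = p v"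
    and x: "x \<in> V" and y: "y \<in> V"
  shows "p x + p y \<le> p (\<lambda>i. x i + y i)"
proof -
  have "directional_inf V p y \<in> sublinear_minorants V p"
    using sublinear_on_directional_inf[OF V p y] directional_inf_le[OF V p y _ order_refl]
    by (simp add: sublinear_minorants_def directional_inf_def)
  with minimal have "\<forall>v\<in>V. directional_inf V p y v = p v"
    by blast
  then have "p x = directional_inf V p y x"
    using x by simp
  also have "\<dots> \<le> p (\<lambda>i. x i + 1 * y i) - 1 * p y"
    by (rule directional_inf_le[OF V p y x]) simp
  finally show ?thesis
    by simp
qed

lemma minimal_sublinear_on_linear_on:
  assumes V: "fun_subspace V" and p: "sublinear_on V p"
    and minimal: "\<forall>r\<in>sublinear_minorants V p. \<forall>v\<in>V. r v = p v"
  shows "linear_on V p"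
proof -
  have add: "p (\<lambda>i. u i + v i) = p u + p v" if "u \<in> V" "v \<in> V" for u v
    using minimal_sublinear_on_superadditive[OF V p minimal that] sublinear_onD_add[OF p that]
    by linarith
  have uminus: "p (\<lambda>i. - u i) = - p u" if "u \<in> V" for u
    using add[OF that fun_subspace_uminus[OF V that]] sublinear_on_zero[OF V p] by simp
  have "p (\<lambda>i. c * u i) = c * p u" if "u \<in> V" for c u
  proof (cases "0 \<le> c")
    case True
    then show ?thesis
      using sublinear_onD_scale[OF p True that] by simp
  next
    case False
    then have "p (\<lambda>i. (-c) * (- u i)) = (-c) * p (\<lambda>i. - u i)"
      by (intro sublinear_onD_scale[OF p _ fun_subspace_uminus[OF V that]]) simp
    then show ?thesis
      using uminus[OF that] by simp
  qed
  with add show ?thesis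
    by (simp add: linear_on_def)
qed

lemma chain_INF_add_le:
  assumes V: "fun_subspace V" and C: "C \<noteq> {}" and sub: "\<And>r. r \<in> C \<Longrightarrow> sublinear_on V r"
    and chain: "\<And>a b. a \<in> C \<Longrightarrow> b \<in> C \<Longrightarrow> (\<forall>v\<in>V. a v \<le> b v) \<or> (\<forall>v\<in>V. b v \<le> a v)"
    and bdd: "\<And>v. v \<in> V \<Longrightarrow> bdd_below ((\<lambda>r. r v) ` C)" and a: "a \<in> V" and b: "b \<in> V"
  shows "(INF r\<in>C. r (\<lambda>i. a i + b i)) \<le> (INF r\<in>C. r a) + (INF r\<in>C. r b)"
proof -
  have greatest: "m \<le> (INF r\<in>C. r v)" if "\<And>r. r \<in> C \<Longrightarrow> m \<le> r v" for v m
    using that C by (simp add: cINF_greatest)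
  have "(INF r\<in>C. r (\<lambda>i. a i + b i)) \<le> r1 a + r2 b" if r1: "r1 \<in> C" and r2: "r2 \<in> C" for r1 r2
  proof -
    have "(INF r\<in>C. r (\<lambda>i. a i + b i)) \<le> r (\<lambda>i. a i + b i)" if "r \<in> C" for r
      using that fun_subspace_add[OF V a b] by (simp add: cINF_lower[OF bdd])
    moreover have "r1 (\<lambda>i. a i + b i) \<le> r1 a + r1 b" "r2 (\<lambda>i. a i + b i) \<le> r2 a + r2 b"
      using sublinear_onD_add[OF sub a b] r1 r2 by auto
    ultimately show ?thesis
      using chain[OF r1 r2] a b r1 r2 by fastforce
  qed
  then have "(INF r\<in>C. r (\<lambda>i. a i + b i)) - r2 b \<le> (INF r\<in>C. r a)" if "r2 \<in> C" for r2
    using that by (intro greatest) (simp add: algebra_simps)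
  then have "(INF r\<in>C. r (\<lambda>i. a i + b i)) - (INF r\<in>C. r a) \<le> (INF r\<in>C. r b)"
    by (intro greatest) (simp add: algebra_simps)
  then show ?thesis
    by simp
qed

lemma sublinear_on_chain_INF:
  assumes V: "fun_subspace V" and C: "C \<noteq> {}" and sub: "\<And>r. r \<in> C \<Longrightarrow> sublinear_on V r"
    and chain: "\<And>a b. a \<in> C \<Longrightarrow> b \<in> C \<Longrightarrow> (\<forall>v\<in>V. a v \<le> b v) \<or> (\<forall>v\<in>V. b v \<le> a v)"
    and bdd: "\<And>v. v \<in> V \<Longrightarrow> bdd_below ((\<lambda>r. r v) ` C)"
  shows "sublinear_on V (\<lambda>v. INF r\<in>C. r v)"
proof -
  have scale_le: "(INF r\<in>C. r (\<lambda>i. c * v i)) \<le> c * (INF r\<in>C. r v)" if c: "0 < c" and v: "v \<in> V" for c v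
  proof -
    have "(INF r\<in>C. r (\<lambda>i. c * v i)) \<le> c * r v" if "r \<in> C" for r
      using cINF_lower[OF bdd[OF fun_subspace_scale[OF V v, of c]] that]
        sublinear_onD_scale[OF sub[OF that] less_imp_le[OF c] v] by simp
    then have "(INF r\<in>C. r (\<lambda>i. c * v i)) / c \<le> (INF r\<in>C. r v)"
      using c C by (intro cINF_greatest) (simp_all add: field_simps)
    then show ?thesis
      using c by (simp add: field_simps)
  qed
  have "(INF r\<in>C. r (\<lambda>i. 0)) = (INF r\<in>C. 0::real)"
    by (rule INF_cong) (simp_all add: sublinear_on_zero[OF V sub])
  then have zero: "(INF r\<in>C. r (\<lambda>i. 0)) = 0"
    using C by simp
  show ?thesis
    unfolding sublinear_on_def
    using chain_INF_add_le[OF V C sub chain bdd]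
      positively_homogeneous_if_scale_le[of V "\<lambda>v. INF r\<in>C. r v", OF V scale_le zero] by blast
qed

lemma sublinear_minorants_chain_lower_bound:
  assumes V: "fun_subspace V" and q: "sublinear_on V q"
    and C: "C \<noteq> {}" "C \<subseteq> sublinear_minorants V q"
    and chain: "\<And>a b. a \<in> C \<Longrightarrow> b \<in> C \<Longrightarrow> (\<forall>v\<in>V. a v \<le> b v) \<or> (\<forall>v\<in>V. b v \<le> a v)"
  shows "\<exists>u\<in>sublinear_minorants V q. \<forall>r\<in>C. \<forall>v\<in>V. u v \<le> r v"
proof -
  have sub: "sublinear_on V r" and le_q: "\<forall>v\<in>V. r v \<le> q v" if "r \<in> C" for r
    using that C(2) by (auto simp: sublinear_minorants_def)
  have "- q (\<lambda>i. - v i) \<le> r v" if "r \<in> C" "v \<in> V" for r v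
    using le_q[OF that(1)] fun_subspace_uminus[OF V that(2)] sublinear_on_uminus_ge[OF V sub[OF that(1)] that(2)]
    by force
  then have bdd: "bdd_below ((\<lambda>r. r v) ` C)" if "v \<in> V" for v
    using that by (intro bdd_belowI[where m = "- q (\<lambda>i. - v i)"]) auto
  define u where "u v = (if v \<in> V then INF r\<in>C. r v else 0)" for v
  have u_le: "\<forall>r\<in>C. \<forall>v\<in>V. u v \<le> r v"
    using cINF_lower[OF bdd] by (simp add: u_def)
  have "u v = (INF r\<in>C. r v)" if "v \<in> V" for v
    using that by (simp add: u_def)
  then have "sublinear_on V u"
    using sublinear_on_cong[OF V sublinear_on_chain_INF[OF V C(1) sub chain bdd]] by blast
  moreover obtain r0 where "r0 \<in> C"
    using C(1) by auto
  ultimately have "u \<in> sublinear_minorants V q"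
    using u_le le_q by (force simp: sublinear_minorants_def u_def intro: order_trans)
  with u_le show ?thesis
    by blast
qed

lemma partial_order_on_sublinear_minorants:
  "partial_order_on (sublinear_minorants V q)
     (relation_of (\<lambda>a b. \<forall>v\<in>V. b v \<le> a v) (sublinear_minorants V q))"
proof -
  have "x = y" if "x \<in> sublinear_minorants V q" "y \<in> sublinear_minorants V q"
    "\<forall>v\<in>V. y v \<le> x v" "\<forall>v\<in>V. x v \<le> y v" for x y
  proof
    fix v
    show "x v = y v"
      using that by (cases "v \<in> V") (auto simp: sublinear_minorants_def intro: order_antisym)
  qed
  then show ?thesis
    unfolding partial_order_on_def preorder_on_def refl_on_def trans_on_def antisym_on_def
    by (auto simp: relation_of_def) (meson order_trans)
qed

text \<open>Zorn's lemma yields a minimal sublinear functional below q, which is linear.\<close>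

theorem hahn_banach_sublinear_on:
  assumes V: "fun_subspace V" and q: "sublinear_on V q"
  shows "\<exists>\<psi>. linear_on V \<psi> \<and> (\<forall>v\<in>V. \<psi> v \<le> q v)"
proof -
  define A where "A = sublinear_minorants V q"
  define above where "above a b \<longleftrightarrow> (\<forall>v\<in>V. b v \<le> a v)" for a b :: "('a \<Rightarrow> real) \<Rightarrow> real"
  have "partial_order_on A (relation_of above A)"
    unfolding A_def above_def by (rule partial_order_on_sublinear_minorants)
  moreover have "\<exists>u\<in>A. \<forall>a\<in>C. above a u" if C: "C \<in> Chains (relation_of above A)" for C
  proof (cases "C = {}")
    case True
    have "(\<lambda>v. if v \<in> V then q v else 0) \<in> A"
      unfolding A_def sublinear_minorants_def using sublinear_on_cong[OF V q] by auto
    with True show ?thesis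
      by auto
  next
    case False
    have "C \<subseteq> A"
      using C unfolding Chains_def relation_of_def by auto
    moreover have "(\<forall>v\<in>V. a v \<le> b v) \<or> (\<forall>v\<in>V. b v \<le> a v)" if "a \<in> C" "b \<in> C" for a b
      using C that unfolding Chains_def relation_of_def above_def by auto
    ultimately show ?thesis
      using sublinear_minorants_chain_lower_bound[OF V q False] by (simp add: A_def above_def)
  qed
  ultimately obtain m where m: "m \<in> A" and maximal: "\<forall>a\<in>A. above m a \<longrightarrow> a = m"
    using predicate_Zorn by blast
  have "\<forall>r\<in>sublinear_minorants V m. \<forall>v\<in>V. r v = m v"
  proof (intro ballI)
    fix r v
    assume "r \<in> sublinear_minorants V m" "v \<in> V"
    with m have "r \<in> A" "above m r"
      by (force simp: A_def sublinear_minorants_def above_def)+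
    with maximal \<open>v \<in> V\<close> show "r v = m v"
      by blast
  qed
  then have "linear_on V m"
    using m by (intro minimal_sublinear_on_linear_on[OF V]) (simp_all add: A_def sublinear_minorants_def)
  with m show ?thesis
    by (auto simp: A_def sublinear_minorants_def)
qed

subsection \<open>Linear minorants nonnegative on a cone\<close>

definition cone_shift_inf :: "(('i \<Rightarrow> real) \<Rightarrow> real) \<Rightarrow> ('i \<Rightarrow> real) set \<Rightarrow> ('i \<Rightarrow> real) \<Rightarrow> real" where
  "cone_shift_inf p K v = (INF k\<in>K. p (\<lambda>i. v i + k i))"

lemma cone_shift_inf_le:
  assumes V: "fun_subspace V" and p: "sublinear_on V p" and K: "K \<subseteq> V"
    and p_K: "\<forall>k\<in>K. 0 \<le> p k" and v: "v \<in> V" and k: "k \<in> K"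
  shows "cone_shift_inf p K v \<le> p (\<lambda>i. v i + k i)"
proof -
  have "- p (\<lambda>i. - v i) \<le> p (\<lambda>i. v i + k i)" if "k \<in> K" for k
  proof -
    have "p (\<lambda>i. (v i + k i) + - v i) \<le> p (\<lambda>i. v i + k i) + p (\<lambda>i. - v i)"
      using that K v by (intro sublinear_onD_add[OF p] fun_subspace_add[OF V] fun_subspace_uminus[OF V]) auto
    moreover have "0 \<le> p k"
      using p_K that by blast
    ultimately show ?thesis
      by simp
  qed
  then show ?thesis
    unfolding cone_shift_inf_def using k
    by (intro cINF_lower bdd_belowI[where m = "- p (\<lambda>i. - v i)"]) auto
qed

lemma cone_shift_inf_greatest:
  "convex_fun_cone K \<Longrightarrow> (\<And>k. k \<in> K \<Longrightarrow> m \<le> p (\<lambda>i. v i + k i)) \<Longrightarrow> m \<le> cone_shift_inf p K v"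
  unfolding cone_shift_inf_def by (intro cINF_greatest) (auto dest: convex_fun_cone_zero)

lemma cone_shift_inf_scale_le:
  assumes V: "fun_subspace V" and p: "sublinear_on V p" and K: "convex_fun_cone K" "K \<subseteq> V"
    and p_K: "\<forall>k\<in>K. 0 \<le> p k" and c: "0 < c" and v: "v \<in> V"
  shows "cone_shift_inf p K (\<lambda>i. c * v i) \<le> c * cone_shift_inf p K v"
proof -
  have "cone_shift_inf p K (\<lambda>i. c * v i) / c \<le> cone_shift_inf p K v"
  proof (rule cone_shift_inf_greatest[OF K(1)])
    fix k
    assume k: "k \<in> K"
    have "cone_shift_inf p K (\<lambda>i. c * v i) \<le> p (\<lambda>i. c * v i + c * k i)"
      using cone_shift_inf_le[OF V p K(2) p_K fun_subspace_scale[OF V v]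
          convex_fun_cone_scale[OF K(1) _ k]] c by simp
    also have "\<dots> = c * p (\<lambda>i. v i + k i)"
      using sublinear_onD_scale[OF p _ fun_subspace_add[OF V v], of c k] c k K(2)
      by (auto simp: distrib_left)
    finally show "cone_shift_inf p K (\<lambda>i. c * v i) / c \<le> p (\<lambda>i. v i + k i)"
      using c by (simp add: field_simps)
  qed
  then show ?thesis
    using c by (simp add: field_simps)
qed

lemma cone_shift_inf_zero:
  assumes V: "fun_subspace V" and p: "sublinear_on V p" and K: "convex_fun_cone K" "K \<subseteq> V"
    and p_K: "\<forall>k\<in>K. 0 \<le> p k"
  shows "cone_shift_inf p K (\<lambda>i. 0) = 0"
proof (rule antisym)
  show "cone_shift_inf p K (\<lambda>i. 0) \<le> 0"
    using cone_shift_inf_le[OF V p K(2) p_K fun_subspace_zero[OF V] convex_fun_cone_zero[OF K(1)]]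
      sublinear_on_zero[OF V p] by simp
  show "0 \<le> cone_shift_inf p K (\<lambda>i. 0)"
    using p_K by (intro cone_shift_inf_greatest[OF K(1)]) simp
qed

lemma cone_shift_inf_add_le:
  assumes V: "fun_subspace V" and p: "sublinear_on V p" and K: "convex_fun_cone K" "K \<subseteq> V"
    and p_K: "\<forall>k\<in>K. 0 \<le> p k" and u: "u \<in> V" and v: "v \<in> V"
  shows "cone_shift_inf p K (\<lambda>i. u i + v i) \<le> cone_shift_inf p K u + cone_shift_inf p K v"
proof -
  note lower = cone_shift_inf_le[OF V p K(2) p_K] and greatest = cone_shift_inf_greatest[OF K(1)]
  have "cone_shift_inf p K (\<lambda>i. u i + v i) - p (\<lambda>i. v i + k2 i) \<le> cone_shift_inf p K u"
    if k2: "k2 \<in> K" for k2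
  proof (rule greatest)
    fix k1
    assume k1: "k1 \<in> K"
    have "cone_shift_inf p K (\<lambda>i. u i + v i) \<le> p (\<lambda>i. (u i + k1 i) + (v i + k2 i))"
      using lower[OF fun_subspace_add[OF V u v] convex_fun_cone_add[OF K(1) k1 k2]]
      by (simp add: algebra_simps)
    also have "\<dots> \<le> p (\<lambda>i. u i + k1 i) + p (\<lambda>i. v i + k2 i)"
      using K(2) k1 k2 by (intro sublinear_onD_add[OF p] fun_subspace_add[OF V] u v) auto
    finally show "cone_shift_inf p K (\<lambda>i. u i + v i) - p (\<lambda>i. v i + k2 i) \<le> p (\<lambda>i. u i + k1 i)"
      by simp
  qed
  then have "cone_shift_inf p K (\<lambda>i. u i + v i) - cone_shift_inf p K u \<le> cone_shift_inf p K v"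
    by (intro greatest) (simp add: algebra_simps)
  then show ?thesis
    by simp
qed

lemma sublinear_on_cone_shift_inf:
  assumes V: "fun_subspace V" and p: "sublinear_on V p" and K: "convex_fun_cone K" "K \<subseteq> V"
    and p_K: "\<forall>k\<in>K. 0 \<le> p k"
  shows "sublinear_on V (cone_shift_inf p K)"
  unfolding sublinear_on_def
  using cone_shift_inf_add_le[OF V p K p_K] positively_homogeneous_if_scale_le[of V "cone_shift_inf p K", OF V
      cone_shift_inf_scale_le[OF V p K p_K] cone_shift_inf_zero[OF V p K p_K]]
  by blast

text \<open>Hahn--Banach applied to the infimal shift over K gives a minorant psi with
  psi(-k) \<le> p(-k + k) = 0 on the cone.\<close>

lemma linear_minorant_nonneg_on_cone:
  assumes V: "fun_subspace V" and p: "sublinear_on V p" and K: "convex_fun_cone K" "K \<subseteq> V"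
    and p_K: "\<forall>k\<in>K. 0 \<le> p k"
  shows "\<exists>\<psi>. linear_on V \<psi> \<and> (\<forall>v\<in>V. \<psi> v \<le> p v) \<and> (\<forall>k\<in>K. 0 \<le> \<psi> k)"
proof -
  note lower = cone_shift_inf_le[OF V p K(2) p_K]
  obtain \<psi> where \<psi>: "linear_on V \<psi>" and \<psi>_le: "\<And>v. v \<in> V \<Longrightarrow> \<psi> v \<le> cone_shift_inf p K v"
    using hahn_banach_sublinear_on[OF V sublinear_on_cone_shift_inf[OF V p K p_K]] by blast
  have "\<psi> v \<le> p v" if "v \<in> V" for v
    using \<psi>_le[OF that] lower[OF that convex_fun_cone_zero[OF K(1)]] by simp
  moreover have "0 \<le> \<psi> k" if k: "k \<in> K" for k
  proof -
    have kV: "k \<in> V"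
      using K(2) k by blast
    have "\<psi> (\<lambda>i. (-1) * k i) \<le> p (\<lambda>i. (-1) * k i + k i)"
      using \<psi>_le[OF fun_subspace_scale[OF V kV, of "-1"]]
        lower[OF fun_subspace_scale[OF V kV, of "-1"] k] by linarith
    then show ?thesis
      using linear_onD_scale[OF \<psi> kV, of "-1"] sublinear_on_zero[OF V p] by simp
  qed
  ultimately show ?thesis
    using \<psi> by blast
qed

subsection \<open>Positive functionals on bounded functions\<close>

lemma linfty_iff: "u \<in> linfty \<longleftrightarrow> (\<exists>B. \<forall>i. \<bar>u i\<bar> \<le> B)"
  unfolding linfty_def bounded_iff by auto

lemma linfty_const: "(\<lambda>i. c) \<in> linfty"
  by (auto simp: linfty_iff)

lemma linfty_bdd_above: "u \<in> linfty \<Longrightarrow> bdd_above (range u)"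
  unfolding linfty_def by (simp add: bounded_imp_bdd_above)

lemma linfty_case_option:
  assumes "u \<in> linfty"
  shows "case_option a u \<in> linfty"
proof -
  obtain B where "\<forall>l. \<bar>u l\<bar> \<le> B"
    using assms by (auto simp: linfty_iff)
  then have "\<bar>case_option a u i\<bar> \<le> max \<bar>a\<bar> B" for i
    by (cases i) (auto simp: le_max_iff_disj)
  then show ?thesis
    by (auto simp: linfty_iff)
qed

lemma SUP_le_iff_linfty: "u \<in> linfty \<Longrightarrow> (SUP i. u i) \<le> c \<longleftrightarrow> (\<forall>i. u i \<le> c)"
  by (simp add: cSUP_le_iff linfty_bdd_above)

lemma fun_subspace_linfty: "fun_subspace linfty"
  unfolding fun_subspace_def
proof (intro conjI ballI allI)
  fix u v :: "'i \<Rightarrow> real"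
  assume "u \<in> linfty" "v \<in> linfty"
  then obtain B C where B: "\<forall>i. \<bar>u i\<bar> \<le> B" and C: "\<forall>i. \<bar>v i\<bar> \<le> C"
    by (auto simp: linfty_iff)
  have "\<bar>u i + v i\<bar> \<le> B + C" for i
    using B[rule_format, of i] C[rule_format, of i] abs_triangle_ineq[of "u i" "v i"] by linarith
  then show "(\<lambda>i. u i + v i) \<in> linfty"
    by (auto simp: linfty_iff)
next
  fix c :: real and u :: "'i \<Rightarrow> real"
  assume "u \<in> linfty"
  then obtain B where "\<forall>i. \<bar>u i\<bar> \<le> B"
    by (auto simp: linfty_iff)
  then have "\<bar>c * u i\<bar> \<le> \<bar>c\<bar> * B" for i
    by (simp add: abs_mult mult_left_mono)
  then show "(\<lambda>i. c * u i) \<in> linfty"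
    by (auto simp: linfty_iff)
qed (simp add: linfty_const)

lemma sublinear_on_linfty_SUP: "sublinear_on linfty (\<lambda>v. SUP i. v i)"
  unfolding sublinear_on_def
proof (intro conjI ballI allI impI)
  fix u v :: "'i \<Rightarrow> real"
  assume u: "u \<in> linfty" and v: "v \<in> linfty"
  have "u i + v i \<le> (SUP i. u i) + (SUP i. v i)" for i
    using cSUP_upper[OF UNIV_I linfty_bdd_above[OF u]] cSUP_upper[OF UNIV_I linfty_bdd_above[OF v]]
    by (rule add_mono)
  then show "(SUP i. u i + v i) \<le> (SUP i. u i) + (SUP i. v i)"
    by (intro cSUP_least) auto
next
  fix c :: real and u :: "'i \<Rightarrow> real"
  assume c: "0 \<le> c" and u: "u \<in> linfty"
  show "(SUP i. c * u i) = c * (SUP i. u i)"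
  proof (cases "c = 0")
    case False
    then have "0 < c"
      using c by simp
    have "c * u i \<le> c * (SUP i. u i)" for i
      using cSUP_upper[OF UNIV_I linfty_bdd_above[OF u]] c by (rule mult_left_mono)
    then have "(SUP i. c * u i) \<le> c * (SUP i. u i)"
      by (intro cSUP_least) auto
    moreover have "c * u i \<le> (SUP i. c * u i)" for i
      by (rule cSUP_upper[OF UNIV_I linfty_bdd_above[OF fun_subspace_scale[OF fun_subspace_linfty u]]])
    then have "u i \<le> (SUP i. c * u i) / c" for i
      using \<open>0 < c\<close> by (simp add: field_simps)
    then have "(SUP i. u i) \<le> (SUP i. c * u i) / c"
      by (intro cSUP_least) auto
    ultimately show ?thesis
      using \<open>0 < c\<close> by (simp add: field_simps)
  qed simp
qed

definition positive_linear :: "(('i \<Rightarrow> real) \<Rightarrow> real) \<Rightarrow> bool" where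
  "positive_linear \<Phi> \<longleftrightarrow> linear_on linfty \<Phi> \<and> (\<forall>u\<in>linfty. (\<forall>i. 0 \<le> u i) \<longrightarrow> 0 \<le> \<Phi> u)"

lemma positive_linear_mono:
  assumes \<Phi>: "positive_linear \<Phi>" and u: "u \<in> linfty" and v: "v \<in> linfty" and le: "\<And>i. u i \<le> v i"
  shows "\<Phi> u \<le> \<Phi> v"
proof -
  have lin: "linear_on linfty \<Phi>"
    using \<Phi> by (simp add: positive_linear_def)
  have nu: "(\<lambda>i. (-1) * u i) \<in> linfty"
    by (rule fun_subspace_scale[OF fun_subspace_linfty u])
  have "0 \<le> \<Phi> (\<lambda>i. v i + (-1) * u i)"
    using \<Phi> fun_subspace_add[OF fun_subspace_linfty v nu] le by (simp add: positive_linear_def)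
  then show ?thesis
    using linear_onD_add[OF lin v nu] linear_onD_scale[OF lin u, of "-1"] by simp
qed

lemma positive_linear_const:
  assumes "positive_linear \<Phi>"
  shows "\<Phi> (\<lambda>i. c) = c * \<Phi> (\<lambda>i. 1)"
proof -
  have "linear_on linfty \<Phi>"
    using assms by (simp add: positive_linear_def)
  from linear_onD_scale[OF this linfty_const[of 1], of c] show ?thesis
    by simp
qed

lemma positive_linear_nonpos:
  assumes \<Phi>: "positive_linear \<Phi>" and u: "u \<in> linfty" and le: "\<And>i. u i \<le> 0"
  shows "\<Phi> u \<le> 0"
  using positive_linear_mono[OF \<Phi> u linfty_const le] positive_linear_const[OF \<Phi>, of 0] by simp

lemma positive_linear_scale:
  assumes \<Phi>: "positive_linear \<Phi>" and c: "0 \<le> c"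
  shows "positive_linear (\<lambda>u. c * \<Phi> u)"
proof -
  have lin: "linear_on linfty \<Phi>" and pos: "\<And>u. u \<in> linfty \<Longrightarrow> \<forall>i. 0 \<le> u i \<Longrightarrow> 0 \<le> \<Phi> u"
    using \<Phi> by (auto simp: positive_linear_def)
  show ?thesis
    unfolding positive_linear_def linear_on_def
    using linear_onD_add[OF lin] linear_onD_scale[OF lin] pos c
    by (simp add: distrib_left)
qed

lemma positive_linear_abs_le:
  assumes \<Phi>: "positive_linear \<Phi>" and u: "u \<in> linfty"
  shows "\<bar>\<Phi> u\<bar> \<le> \<Phi> (\<lambda>i. 1) * supnorm u"
proof -
  obtain B where "\<forall>i. \<bar>u i\<bar> \<le> B"
    using u by (auto simp: linfty_iff)
  then have abs_le: "\<bar>u i\<bar> \<le> supnorm u" for i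
    unfolding supnorm_def by (intro cSUP_upper bdd_aboveI2[where M = B]) auto
  have lo: "- supnorm u \<le> u i" and hi: "u i \<le> supnorm u" for i
    using abs_le[of i] abs_ge_minus_self[of "u i"] abs_ge_self[of "u i"] by linarith+
  have "\<Phi> (\<lambda>i. - supnorm u) \<le> \<Phi> u"
    by (rule positive_linear_mono[OF \<Phi> linfty_const u lo])
  moreover have "\<Phi> u \<le> \<Phi> (\<lambda>i. supnorm u)"
    by (rule positive_linear_mono[OF \<Phi> u linfty_const hi])
  moreover have "\<Phi> (\<lambda>i. - supnorm u) = - (\<Phi> (\<lambda>i. 1) * supnorm u)"
    "\<Phi> (\<lambda>i. supnorm u) = \<Phi> (\<lambda>i. 1) * supnorm u"
    using positive_linear_const[OF \<Phi>, of "- supnorm u"] positive_linear_const[OF \<Phi>, of "supnorm u"]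
    by (simp_all add: mult.commute)
  ultimately show ?thesis
    by linarith
qed

lemma pos_cont_lin_functional_iff_positive_linear:
  "pos_cont_lin_functional \<Phi> \<longleftrightarrow> positive_linear \<Phi>"
  using positive_linear_abs_le[of \<Phi>]
  by (auto simp: pos_cont_lin_functional_def positive_linear_def linear_on_def)

lemma linear_on_le_SUP_imp_positive_linear:
  assumes lin: "linear_on linfty \<psi>" and le: "\<forall>v\<in>linfty. \<psi> v \<le> (SUP i. v i)"
  shows "positive_linear \<psi>" and "\<psi> (\<lambda>i. 1) = 1"
proof -
  have "0 \<le> \<psi> u" if u: "u \<in> linfty" and nonneg: "\<forall>i. 0 \<le> u i" for u
  proof -
    have "\<psi> (\<lambda>i. (-1) * u i) \<le> (SUP i. (-1) * u i)"
      using le fun_subspace_scale[OF fun_subspace_linfty u] by blast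
    also have "\<dots> \<le> 0"
      using nonneg by (intro cSUP_least) auto
    finally show ?thesis
      using linear_onD_scale[OF lin u, of "-1"] by simp
  qed
  with lin show "positive_linear \<psi>"
    by (simp add: positive_linear_def)
  have "c * \<psi> (\<lambda>i. 1) \<le> c" for c
    using le[rule_format, OF linfty_const[of c]] linear_onD_scale[OF lin linfty_const[of 1], of c]
    by simp
  from this[of 1] this[of "-1"] show "\<psi> (\<lambda>i. 1) = 1"
    by linarith
qed

lemma positive_linear_case_option:
  fixes \<psi> :: "('l option \<Rightarrow> real) \<Rightarrow> real"
  assumes "positive_linear \<psi>"
  shows "positive_linear (\<lambda>u. \<psi> (case_option 0 u))"
proof -
  have "case_option 0 (\<lambda>l. u l + v l) = (\<lambda>i. case_option 0 u i + case_option 0 v i)"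
    "case_option 0 (\<lambda>l. c * u l) = (\<lambda>i. c * case_option 0 u i)" for u v :: "'l \<Rightarrow> real" and c
    by (auto split: option.split)
  with assms show ?thesis
    by (auto simp: positive_linear_def linear_on_def linfty_case_option split: option.split)
qed

lemma linear_on_case_option:
  fixes \<psi> :: "('l option \<Rightarrow> real) \<Rightarrow> real"
  assumes lin: "linear_on linfty \<psi>" and u: "u \<in> linfty"
  shows "\<psi> (case_option a u) = a * \<psi> (case_option 1 (\<lambda>l. 0)) + \<psi> (case_option 0 u)"
proof -
  let ?e = "case_option 1 (\<lambda>l. 0) :: 'l option \<Rightarrow> real"
  have e: "?e \<in> linfty"
    by (rule linfty_case_option[OF linfty_const])
  have "\<psi> (case_option a u) = \<psi> (\<lambda>i. a * ?e i + case_option 0 u i)"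
    by (rule arg_cong[where f = \<psi>]) (auto split: option.split)
  also have "\<dots> = \<psi> (\<lambda>i. a * ?e i) + \<psi> (case_option 0 u)"
    by (rule linear_onD_add[OF lin fun_subspace_scale[OF fun_subspace_linfty e] linfty_case_option[OF u]])
  also have "\<psi> (\<lambda>i. a * ?e i) = a * \<psi> ?e"
    by (rule linear_onD_scale[OF lin e])
  finally show ?thesis .
qed

subsection \<open>Infsup-convex families\<close>

lemma sum_lessThan_add:
  fixes f :: "nat \<Rightarrow> 'a::comm_monoid_add"
  shows "(\<Sum>j<m + n. f j) = (\<Sum>j<m. f j) + (\<Sum>j<n. f (m + j))"
  by (induction n) (simp_all add: add_ac)

definition nonneg_combinations :: "('i \<Rightarrow> 'a \<Rightarrow> real) \<Rightarrow> 'a set \<Rightarrow> ('i \<Rightarrow> real) set" where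
  "nonneg_combinations g X =
     {(\<lambda>i. \<Sum>j<m. t j * g i (xs j)) | (m::nat) t xs. (\<forall>j<m. 0 \<le> t j) \<and> (\<forall>j<m. xs j \<in> X)}"

lemma nonneg_combinationsE:
  assumes "k \<in> nonneg_combinations g X"
  obtains m :: nat and t xs where "\<forall>j<m. 0 \<le> t j" "\<forall>j<m. xs j \<in> X" "k = (\<lambda>i. \<Sum>j<m. t j * g i (xs j))"
  using assms unfolding nonneg_combinations_def by blast

lemma nonneg_combinations_point: "x \<in> X \<Longrightarrow> (\<lambda>i. g i x) \<in> nonneg_combinations g X"
  unfolding nonneg_combinations_def
  by (intro CollectI exI[of _ 1] exI[of _ "\<lambda>_. 1"] exI[of _ "\<lambda>_. x"]) auto

lemma convex_fun_cone_nonneg_combinations: "convex_fun_cone (nonneg_combinations g X)"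
  unfolding convex_fun_cone_def
proof (intro conjI ballI allI impI)
  show "(\<lambda>i. 0) \<in> nonneg_combinations g X"
    unfolding nonneg_combinations_def by (intro CollectI exI[of _ 0]) simp
next
  fix k1 k2
  assume k1: "k1 \<in> nonneg_combinations g X" and k2: "k2 \<in> nonneg_combinations g X"
  obtain m1 :: nat and t1 xs1 where
    1: "\<forall>j<m1. 0 \<le> t1 j" "\<forall>j<m1. xs1 j \<in> X" "k1 = (\<lambda>i. \<Sum>j<m1. t1 j * g i (xs1 j))"
    using k1 by (blast elim: nonneg_combinationsE)
  obtain m2 :: nat and t2 xs2 where
    2: "\<forall>j<m2. 0 \<le> t2 j" "\<forall>j<m2. xs2 j \<in> X" "k2 = (\<lambda>i. \<Sum>j<m2. t2 j * g i (xs2 j))"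
    using k2 by (blast elim: nonneg_combinationsE)
  define t where "t j = (if j < m1 then t1 j else t2 (j - m1))" for j
  define xs where "xs j = (if j < m1 then xs1 j else xs2 (j - m1))" for j
  have "(\<Sum>j<m1 + m2. t j * g i (xs j)) = k1 i + k2 i" for i
    unfolding sum_lessThan_add 1(3) 2(3) by (simp add: t_def xs_def)
  moreover have "\<forall>j<m1 + m2. 0 \<le> t j" "\<forall>j<m1 + m2. xs j \<in> X"
    using 1 2 by (auto simp: t_def xs_def)
  ultimately show "(\<lambda>i. k1 i + k2 i) \<in> nonneg_combinations g X"
    unfolding nonneg_combinations_def by (intro CollectI exI[of _ "m1 + m2"] exI[of _ t] exI[of _ xs]) auto
next
  fix c :: real and k
  assume c: "0 \<le> c" and "k \<in> nonneg_combinations g X"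
  then obtain m :: nat and t xs where "\<forall>j<m. 0 \<le> t j" "\<forall>j<m. xs j \<in> X" "k = (\<lambda>i. \<Sum>j<m. t j * g i (xs j))"
    by (blast elim: nonneg_combinationsE)
  with c show "(\<lambda>i. c * k i) \<in> nonneg_combinations g X"
    unfolding nonneg_combinations_def
    by (intro CollectI exI[of _ m] exI[of _ "\<lambda>j. c * t j"] exI[of _ xs])
      (auto simp: sum_distrib_left mult.assoc)
qed

lemma nonneg_combinations_subset_linfty:
  assumes "\<forall>x\<in>X. (\<lambda>i. g i x) \<in> linfty"
  shows "nonneg_combinations g X \<subseteq> linfty"
proof
  fix k
  assume "k \<in> nonneg_combinations g X"
  then obtain m :: nat and t xs where xs: "\<forall>j<m. xs j \<in> X" and k: "k = (\<lambda>i. \<Sum>j<m. t j * g i (xs j))"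
    by (blast elim: nonneg_combinationsE)
  have "(\<lambda>i. \<Sum>j<n. t j * g i (xs j)) \<in> linfty" if "n \<le> m" for n
    using that
  proof (induction n)
    case 0
    then show ?case
      using linfty_const[of 0] by simp
  next
    case (Suc n)
    then show ?case
      using assms xs by (simp add: fun_subspace_add_scale[OF fun_subspace_linfty])
  qed
  with k show "k \<in> linfty"
    by simp
qed

text \<open>Dividing by the total weight puts the coefficients into the simplex, where
  infsup-convexity applies.\<close>

lemma infsup_convex_SUP_nonneg:
  assumes isc: "infsup_convex g X" and inf_nonneg: "0 \<le> (INF x\<in>X. SUP i. ereal (g i x))"
    and bdd: "\<forall>x\<in>X. (\<lambda>i. g i x) \<in> linfty" and k: "k \<in> nonneg_combinations g X"
  shows "0 \<le> (SUP i. k i)"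
proof -
  obtain m :: nat and t xs where t: "\<forall>j<m. 0 \<le> t j" and xs: "\<forall>j<m. xs j \<in> X"
    and k_eq: "k = (\<lambda>i. \<Sum>j<m. t j * g i (xs j))"
    using k by (blast elim: nonneg_combinationsE)
  define T where "T = (\<Sum>j<m. t j)"
  have "0 \<le> T"
    unfolding T_def using t by (intro sum_nonneg) auto
  show ?thesis
  proof (cases "T = 0")
    case True
    then have "\<forall>j\<in>{..<m}. t j = 0"
      using t sum_nonneg_eq_0_iff[of "{..<m}" t] by (simp add: T_def)
    then show ?thesis
      by (simp add: k_eq)
  next
    case False
    then have "0 < T"
      using \<open>0 \<le> T\<close> by simp
    have "1 \<le> m"
      using False by (cases m) (auto simp: T_def)
    have "\<forall>j<m. 0 \<le> t j / T" "(\<Sum>j<m. t j / T) = 1"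
      using t \<open>0 < T\<close> by (simp_all add: T_def sum_divide_distrib[symmetric])
    moreover have "1 \<le> m \<longrightarrow> (\<forall>j<m. 0 \<le> t j / T) \<longrightarrow> (\<Sum>j<m. t j / T) = 1 \<longrightarrow>
        (\<forall>j<m. xs j \<in> X) \<longrightarrow>
        (INF x\<in>X. SUP i. ereal (g i x)) \<le> (SUP i. ereal (\<Sum>j<m. t j / T * g i (xs j)))"
      using isc[unfolded infsup_convex_def, THEN spec[of _ m], THEN spec[of _ "\<lambda>j. t j / T"],
          THEN spec[of _ xs]] .
    ultimately have "0 \<le> (SUP i. ereal (\<Sum>j<m. t j / T * g i (xs j)))"
      using \<open>1 \<le> m\<close> xs inf_nonneg by (blast intro: order_trans)
    also have "(\<lambda>i. \<Sum>j<m. t j / T * g i (xs j)) = (\<lambda>i. k i / T)"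
      by (simp add: k_eq sum_divide_distrib)
    also have "(SUP i. ereal (k i / T)) \<le> ereal ((SUP i. k i) / T)"
      using \<open>0 < T\<close> cSUP_upper[OF UNIV_I linfty_bdd_above[OF
            nonneg_combinations_subset_linfty[OF bdd, THEN subsetD, OF k]]]
      by (intro SUP_least) (simp add: divide_right_mono)
    finally show ?thesis
      using \<open>0 < T\<close> by (simp add: zero_le_divide_iff)
  qed
qed

lemma infsup_convex_positive_functional:
  assumes isc: "infsup_convex g X" and inf_nonneg: "0 \<le> (INF x\<in>X. SUP i. ereal (g i x))"
    and bdd: "\<forall>x\<in>X. (\<lambda>i. g i x) \<in> linfty"
  shows "\<exists>\<psi>. positive_linear \<psi> \<and> \<psi> (\<lambda>i. 1) = 1 \<and> (\<forall>x\<in>X. 0 \<le> \<psi> (\<lambda>i. g i x))"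
proof -
  obtain \<psi> where lin: "linear_on linfty \<psi>" and le: "\<forall>v\<in>linfty. \<psi> v \<le> (SUP i. v i)"
    and nonneg: "\<forall>k\<in>nonneg_combinations g X. 0 \<le> \<psi> k"
    using linear_minorant_nonneg_on_cone[OF fun_subspace_linfty sublinear_on_linfty_SUP
        convex_fun_cone_nonneg_combinations nonneg_combinations_subset_linfty[OF bdd]]
      infsup_convex_SUP_nonneg[OF isc inf_nonneg bdd]
    by blast
  then show ?thesis
    using linear_on_le_SUP_imp_positive_linear[OF lin le] nonneg_combinations_point[of _ X g]
    by blast
qed

subsection \<open>Lagrange multipliers\<close>

lemma optimal_imp_INF_SUP_nonneg:
  fixes fam :: "'l \<Rightarrow> 'a \<Rightarrow> real"
  assumes opt: "\<forall>x\<in>X. (\<forall>l. fam l x \<le> 0) \<longrightarrow> f x0 \<le> f x"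
  shows "0 \<le> (INF x\<in>X. SUP i. ereal (case i of None \<Rightarrow> f x - f x0 | Some l \<Rightarrow> fam l x))"
proof (rule INF_greatest)
  fix x
  assume x: "x \<in> X"
  have "\<exists>i. 0 \<le> (case i of None \<Rightarrow> f x - f x0 | Some l \<Rightarrow> fam l x)"
  proof (cases "\<forall>l. fam l x \<le> 0")
    case True
    with opt x show ?thesis
      by (auto intro!: exI[of _ None])
  next
    case False
    then obtain l where "0 < fam l x"
      by (auto simp: not_le)
    then show ?thesis
      by (auto intro!: exI[of _ "Some l"])
  qed
  then show "0 \<le> (SUP i. ereal (case i of None \<Rightarrow> f x - f x0 | Some l \<Rightarrow> fam l x))"
    by (metis SUP_upper2 UNIV_I ereal_less_eq(3) zero_ereal_def)
qed

lemma positive_linear_option_split: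
  fixes \<psi> :: "('l option \<Rightarrow> real) \<Rightarrow> real"
  assumes \<psi>: "positive_linear \<psi>" and \<psi>_1: "\<psi> (\<lambda>i. 1) = 1"
  shows "0 \<le> \<psi> (case_option 1 (\<lambda>l. 0))" and "positive_linear (\<lambda>u. \<psi> (case_option 0 u))"
    and "\<psi> (case_option 1 (\<lambda>l. 0)) + \<psi> (case_option 0 (\<lambda>l. 1)) = 1"
proof -
  have "\<forall>i. 0 \<le> case_option (1::real) (\<lambda>l. 0) i"
    by (simp split: option.split)
  then show "0 \<le> \<psi> (case_option 1 (\<lambda>l. 0))"
    using \<psi> linfty_case_option[OF linfty_const[of 0], of 1] unfolding positive_linear_def by blast
  show "positive_linear (\<lambda>u. \<psi> (case_option 0 u))"
    by (rule positive_linear_case_option[OF \<psi>])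
  have "\<psi> (case_option 1 (\<lambda>l. 1)) = \<psi> (\<lambda>i. 1)"
    by (rule arg_cong[where f = \<psi>]) (simp add: fun_eq_iff split: option.split)
  moreover have "linear_on linfty \<psi>"
    using \<psi> by (simp add: positive_linear_def)
  ultimately show "\<psi> (case_option 1 (\<lambda>l. 0)) + \<psi> (case_option 0 (\<lambda>l. 1)) = 1"
    using linear_on_case_option[OF _ linfty_const, of \<psi> 1 1] \<psi>_1 by linarith
qed

text \<open>The multipliers are alpha = psi(e_None) for the objective and phi = psi restricted to the
  constraint coordinates, where psi comes from the infsup-convex alternative on l-infinity(Option l).\<close>

lemma fritz_john_multipliers:
  fixes fam :: "'l \<Rightarrow> 'a \<Rightarrow> real"
  assumes bdd: "\<forall>x\<in>X. (\<lambda>l. fam l x) \<in> linfty"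
    and isc: "infsup_convex (\<lambda>i x. case i of None \<Rightarrow> f x - f x0 | Some l \<Rightarrow> fam l x) X"
    and opt: "\<forall>x\<in>X. (\<forall>l. fam l x \<le> 0) \<longrightarrow> f x0 \<le> f x"
  obtains \<alpha> \<phi> where "0 \<le> \<alpha>" "positive_linear \<phi>" "\<alpha> + \<phi> (\<lambda>l. 1) = 1"
    "\<forall>x\<in>X. 0 \<le> (f x - f x0) * \<alpha> + \<phi> (\<lambda>l. fam l x)"
proof -
  obtain \<psi> where \<psi>: "positive_linear \<psi>" "\<psi> (\<lambda>i. 1) = 1"
    and \<psi>_g: "\<forall>x\<in>X. 0 \<le> \<psi> (case_option (f x - f x0) (\<lambda>l. fam l x))"
    using infsup_convex_positive_functional[OF isc optimal_imp_INF_SUP_nonneg[OF opt]] bdd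
    by (blast intro: linfty_case_option)
  have "0 \<le> (f x - f x0) * \<psi> (case_option 1 (\<lambda>l. 0)) + \<psi> (case_option 0 (\<lambda>l. fam l x))"
    if x: "x \<in> X" for x
  proof -
    have "linear_on linfty \<psi>"
      using \<psi>(1) by (simp add: positive_linear_def)
    with \<psi>_g x bdd linear_on_case_option[of \<psi> "\<lambda>l. fam l x" "f x - f x0"] show ?thesis
      by force
  qed
  with positive_linear_option_split[OF \<psi>] show ?thesis
    using that by blast
qed

lemma slater_imp_multiplier_pos:
  fixes fam :: "'l \<Rightarrow> 'a \<Rightarrow> real"
  assumes "0 \<le> \<alpha>" and \<phi>: "positive_linear \<phi>" and sum1: "\<alpha> + \<phi> (\<lambda>l. 1) = 1"
    and fj: "\<forall>x\<in>X. 0 \<le> (f x - f x0) * \<alpha> + \<phi> (\<lambda>l. fam l x)"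
    and bdd: "\<forall>x\<in>X. (\<lambda>l. fam l x) \<in> linfty" and slater: "\<exists>x1\<in>X. (SUP l. fam l x1) < 0"
  shows "0 < \<alpha>"
proof (rule ccontr)
  assume "\<not> 0 < \<alpha>"
  with \<open>0 \<le> \<alpha>\<close> have "\<alpha> = 0"
    by simp
  obtain x1 where x1: "x1 \<in> X" "(SUP l. fam l x1) < 0"
    using slater by blast
  have "0 \<le> \<phi> (\<lambda>l. fam l x1)"
    using fj x1(1) \<open>\<alpha> = 0\<close> by simp
  also have "\<dots> \<le> \<phi> (\<lambda>l. SUP l. fam l x1)"
    using bdd x1(1) by (intro positive_linear_mono[OF \<phi> _ linfty_const] cSUP_upper linfty_bdd_above) auto
  also have "\<dots> = (SUP l. fam l x1)"
    using positive_linear_const[OF \<phi>, of "SUP l. fam l x1"] sum1 \<open>\<alpha> = 0\<close> by simp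
  finally show False
    using x1(2) by simp
qed

lemma optimal_imp_lagrange_multiplier:
  fixes fam :: "'l \<Rightarrow> 'a \<Rightarrow> real"
  assumes x0: "x0 \<in> X" "\<forall>l. fam l x0 \<le> 0" and bdd: "\<forall>x\<in>X. (\<lambda>l. fam l x) \<in> linfty"
    and isc: "infsup_convex (\<lambda>i x. case i of None \<Rightarrow> f x - f x0 | Some l \<Rightarrow> fam l x) X"
    and slater: "\<exists>x1\<in>X. (SUP l. fam l x1) < 0"
    and opt: "\<forall>x\<in>X. (\<forall>l. fam l x \<le> 0) \<longrightarrow> f x0 \<le> f x"
  shows "\<exists>\<Phi>. positive_linear \<Phi> \<and> (\<forall>x\<in>X. f x0 + \<Phi> (\<lambda>l. fam l x0) \<le> f x + \<Phi> (\<lambda>l. fam l x)) \<and>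
           \<Phi> (\<lambda>l. fam l x0) = 0"
proof -
  obtain \<alpha> \<phi> where \<phi>: "positive_linear \<phi>" and fj: "\<forall>x\<in>X. 0 \<le> (f x - f x0) * \<alpha> + \<phi> (\<lambda>l. fam l x)"
    and "0 < \<alpha>"
    using fritz_john_multipliers[OF bdd isc opt] slater_imp_multiplier_pos[OF _ _ _ _ bdd slater]
    by metis
  define \<Phi> where "\<Phi> u = (1 / \<alpha>) * \<phi> u" for u
  have \<Phi>: "positive_linear \<Phi>"
    unfolding \<Phi>_def using positive_linear_scale[OF \<phi>, of "1 / \<alpha>"] \<open>0 < \<alpha>\<close> by simp
  have saddle: "f x0 \<le> f x + \<Phi> (\<lambda>l. fam l x)" if "x \<in> X" for x
  proof -
    have "0 \<le> ((f x - f x0) * \<alpha> + \<phi> (\<lambda>l. fam l x)) / \<alpha>"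
      using fj that \<open>0 < \<alpha>\<close> by simp
    then show ?thesis
      using \<open>0 < \<alpha>\<close> by (simp add: \<Phi>_def add_divide_distrib)
  qed
  have "\<Phi> (\<lambda>l. fam l x0) \<le> 0"
    using x0 bdd by (intro positive_linear_nonpos[OF \<Phi>]) auto
  with saddle[OF x0(1)] have "\<Phi> (\<lambda>l. fam l x0) = 0"
    by simp
  with \<Phi> saddle show ?thesis
    by auto
qed

lemma lagrange_multiplier_imp_optimal:
  fixes fam :: "'l \<Rightarrow> 'a \<Rightarrow> real"
  assumes \<Phi>: "positive_linear \<Phi>" and bdd: "\<forall>x\<in>X. (\<lambda>l. fam l x) \<in> linfty"
    and saddle: "\<forall>x\<in>X. f x0 + \<Phi> (\<lambda>l. fam l x0) \<le> f x + \<Phi> (\<lambda>l. fam l x)"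
    and zero: "\<Phi> (\<lambda>l. fam l x0) = 0" and x: "x \<in> X" "\<forall>l. fam l x \<le> 0"
  shows "f x0 \<le> f x"
proof -
  have "\<Phi> (\<lambda>l. fam l x) \<le> 0"
    using x bdd by (intro positive_linear_nonpos[OF \<Phi>]) auto
  with saddle x(1) zero show ?thesis
    by fastforce
qed

lemma ereal_eq_INF_iff:
  assumes "x0 \<in> S"
  shows "ereal (h x0) = (INF x\<in>S. ereal (h x)) \<longleftrightarrow> (\<forall>x\<in>S. h x0 \<le> h x)"
proof
  assume eq: "ereal (h x0) = (INF x\<in>S. ereal (h x))"
  show "\<forall>x\<in>S. h x0 \<le> h x"
  proof
    fix x
    assume "x \<in> S"
    then have "ereal (h x0) \<le> ereal (h x)"
      unfolding eq by (rule INF_lower)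
    then show "h x0 \<le> h x"
      by simp
  qed
next
  assume "\<forall>x\<in>S. h x0 \<le> h x"
  then show "ereal (h x0) = (INF x\<in>S. ereal (h x))"
    using assms by (intro antisym INF_greatest INF_lower) auto
qed

theorem theorem4p4:
  fixes X :: "'a set" and fam :: "'l \<Rightarrow> 'a \<Rightarrow> real" and f :: "'a \<Rightarrow> real" and x0 :: 'a
  assumes X_ne: "X \<noteq> {}"
    and x0_in: "x0 \<in> X"
    and feas_ne: "{x\<in>X. (SUP l. fam l x) \<le> 0} \<noteq> {}"
    and bdd: "\<forall>x\<in>X. (\<lambda>l. fam l x) \<in> linfty"
    and isc: "infsup_convex
                (\<lambda>i x. case i of None \<Rightarrow> f x - f x0 | Some l \<Rightarrow> fam l x) X"
    and slater: "\<exists>x1\<in>X. (SUP l. fam l x1) < 0"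
  shows "(x0 \<in> {x\<in>X. (SUP l. fam l x) \<le> 0} \<and>
          ereal (f x0) = (INF x\<in>{x\<in>X. (SUP l. fam l x) \<le> 0}. ereal (f x)))
     \<longleftrightarrow>
         (x0 \<in> {x\<in>X. (SUP l. fam l x) \<le> 0} \<and>
          (\<exists>\<Phi>0. pos_cont_lin_functional \<Phi>0 \<and>
             ereal (f x0 + \<Phi>0 (\<lambda>l. fam l x0)) = (INF x\<in>X. ereal (f x + \<Phi>0 (\<lambda>l. fam l x))) \<and>
             \<Phi>0 (\<lambda>l. fam l x0) = 0))"
proof -
  define F where "F = {x\<in>X. (SUP l. fam l x) \<le> 0}"
  have F: "x \<in> F \<longleftrightarrow> x \<in> X \<and> (\<forall>l. fam l x \<le> 0)" for x
    using bdd by (auto simp: F_def SUP_le_iff_linfty)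
  have lagrangian: "ereal (f x0 + \<Phi> (\<lambda>l. fam l x0)) = (INF x\<in>X. ereal (f x + \<Phi> (\<lambda>l. fam l x))) \<longleftrightarrow>
      (\<forall>x\<in>X. f x0 + \<Phi> (\<lambda>l. fam l x0) \<le> f x + \<Phi> (\<lambda>l. fam l x))" for \<Phi>
    using ereal_eq_INF_iff[OF x0_in, of "\<lambda>x. f x + \<Phi> (\<lambda>l. fam l x)"] .
  show ?thesis
    unfolding F_def[symmetric] pos_cont_lin_functional_iff_positive_linear lagrangian
  proof (intro iffI conjI)
    assume "x0 \<in> F \<and> ereal (f x0) = (INF x\<in>F. ereal (f x))"
    with F optimal_imp_lagrange_multiplier[OF x0_in _ bdd isc slater] show
      "\<exists>\<Phi>. positive_linear \<Phi> \<and> (\<forall>x\<in>X. f x0 + \<Phi> (\<lambda>l. fam l x0) \<le> f x + \<Phi> (\<lambda>l. fam l x)) \<and>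
         \<Phi> (\<lambda>l. fam l x0) = 0"
      by (auto simp: ereal_eq_INF_iff)
  next
    assume "x0 \<in> F \<and> (\<exists>\<Phi>. positive_linear \<Phi> \<and>
      (\<forall>x\<in>X. f x0 + \<Phi> (\<lambda>l. fam l x0) \<le> f x + \<Phi> (\<lambda>l. fam l x)) \<and> \<Phi> (\<lambda>l. fam l x0) = 0)"
    with F lagrange_multiplier_imp_optimal[OF _ bdd] show "ereal (f x0) = (INF x\<in>F. ereal (f x))"
      by (auto simp: ereal_eq_INF_iff)
  qed auto
qed

end
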